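(* Let $\alpha=\exp\left(\frac{2\pi i}{5}\right)$, let $c,x\in\mathbb{C}$, and let $(a_1,A_1),\dots,(a_p,A_p)$ and $(b_1,B_1),\dots,(b_q,B_q)$ be parameter pairs ($a_j,b_j\in\mathbb{C}$, $A_j,B_j$ nonzero reals) such that all Gamma functions involved are well defined and all series involved converge. Then $$\sum_{k=0}^{4}\alpha^{k}\,{}_p\Psi_q\left[\begin{array}{c}(a_1,A_1),\dots,(a_p,A_p);\\(b_1,B_1),\dots,(b_q,B_q);\end{array} c(x\alpha^k)^2\right] =\frac{5c^2x^4\,\Gamma\!\left(\frac35\right)\Gamma\!\left(\frac45\right)\Gamma\!\left(\frac65\right)\Gamma\!\left(\frac75\right)}{2}\;{}_p\Psi_{q+4}\left[\begin{array}{c}(a_1+2A_1,5A_1),\dots,(a_p+2A_p,5A_p);\\ \left(\tfrac35,1\right),\left(\tfrac45,1\right),\left(\tfrac65,1\right),\left(\tfrac75,1\right),(b_1+2B_1,5B_1),\dots,(b_q+2B_q,5B_q);\end{array}\left(\frac{cx^2}{5}\right)^5\right].$$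
   Context: The Fox–Wright function is defined by the series $${}_p\Psi_q\left[\begin{array}{c}(\alpha_1,A_1),\dots,(\alpha_p,A_p);\\(\beta_1,B_1),\dots,(\beta_q,B_q);\end{array}z\right]=\sum_{n=0}^{\infty}\frac{\Gamma(\alpha_1+A_1n)\cdots\Gamma(\alpha_p+A_pn)}{\Gamma(\beta_1+B_1n)\cdots\Gamma(\beta_q+B_qn)}\frac{z^n}{n!},$$ where $\alpha_i,\beta_j\in\mathbb{C}$ and $A_i,B_j$ are nonzero real numbers chosen so that the Gamma products are well defined. Values of parameters and variables for which the expressions do not make sense are excluded. *)

theory Defs
  imports "HOL-Analysis.Analysis"
begin

definition fw_term :: "(complex \<times> real) list \<Rightarrow> (complex \<times> real) list \<Rightarrow> complex \<Rightarrow> nat \<Rightarrow> complex" where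
  "fw_term as bs z n =
     (\<Prod>p\<leftarrow>as. Gamma (fst p + of_real (snd p) * of_nat n)) /
     (\<Prod>p\<leftarrow>bs. Gamma (fst p + of_real (snd p) * of_nat n)) * z ^ n / of_nat (fact n)"

definition fox_wright :: "(complex \<times> real) list \<Rightarrow> (complex \<times> real) list \<Rightarrow> complex \<Rightarrow> complex" where
  "fox_wright as bs z = (\<Sum>n. fw_term as bs z n)"

definition fw_num_ok :: "(complex \<times> real) list \<Rightarrow> bool" where
  "fw_num_ok as \<longleftrightarrow> (\<forall>p\<in>set as. \<forall>n::nat. fst p + of_real (snd p) * of_nat n \<notin> \<int>\<^sub>\<le>\<^sub>0)"

end

theory Submission
  imports Defs
begin

text \<open>Twisting by \<open>\<alpha>\<^sup>k\<close> and summing over \<open>k\<close> is a roots-of-unity filter: the \<open>n\<close>-th term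
  of the left side picks up \<open>\<Sum>\<^sub>k \<alpha>\<^bsup>(2n+1)k\<^esup>\<close>, which is 5 if \<open>n \<equiv> 2 (mod 5)\<close> and 0 otherwise.
  For \<open>n = 5m + 2\<close> the factorial splits as
  \<open>(5m+2)! = 2 \<cdot> 5\<^bsup>5m\<^esup> \<cdot> m! \<cdot> (3/5)\<^sub>m (4/5)\<^sub>m (6/5)\<^sub>m (7/5)\<^sub>m\<close>, and the four Pochhammer
  symbols are the ratios \<open>\<Gamma>(r + m) / \<Gamma>(r)\<close> that become the new denominator parameters.\<close>

lemma primitive_root_of_unity_power_eq_1_iff:
  assumes "n \<ge> 1"
  shows "exp (2 * of_real pi * \<i> / of_nat n) ^ j = 1 \<longleftrightarrow> n dvd j"
  using complex_root_unity_eq_1[OF assms, of j]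
  by (simp add: exp_of_nat_mult [symmetric] mult_ac)

lemma sum_powers_primitive_root_of_unity:
  assumes "n \<ge> 1"
  shows "(\<Sum>k<n. (exp (2 * of_real pi * \<i> / of_nat n) ^ j) ^ k) = (if n dvd j then of_nat n else 0)"
proof (cases "n dvd j")
  case True
  then have "exp (2 * of_real pi * \<i> / of_nat n) ^ j = 1"
    by (simp add: primitive_root_of_unity_power_eq_1_iff[OF assms])
  with True show ?thesis by simp
next
  case False
  define w where "w = exp (2 * of_real pi * \<i> / of_nat n) ^ j"
  have "w \<noteq> 1" using False by (simp add: w_def primitive_root_of_unity_power_eq_1_iff[OF assms])
  moreover have "w ^ n = 1"
    using primitive_root_of_unity_power_eq_1_iff[OF assms, of "j * n"]
    by (simp add: w_def power_mult)
  ultimately show ?thesis using False by (simp add: geometric_sum w_def[symmetric])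
qed

lemma fact_five_mult_plus_two:
  "(fact (5 * m + 2) :: 'a :: field_char_0) =
     2 * 5 ^ (5 * m) * fact m * pochhammer (3/5) m * pochhammer (4/5) m
       * pochhammer (6/5) m * pochhammer (7/5) m"
proof (induction m)
  case (Suc m)
  let ?m = "of_nat m :: 'a"
  have "5 * Suc m + 2 = Suc (Suc (Suc (Suc (Suc (5 * m + 2)))))" by simp
  then have "(fact (5 * Suc m + 2) :: 'a) = fact (5 * m + 2) *
      (5 ^ 5 * ((3/5 + ?m) * (4/5 + ?m) * (1 + ?m) * (6/5 + ?m) * (7/5 + ?m)))"
    by (simp only: fact_Suc of_nat_mult) (simp add: field_simps)
  also have "\<dots> = 2 * 5 ^ (5 * m) * fact m * pochhammer (3/5) m * pochhammer (4/5) m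
       * pochhammer (6/5) m * pochhammer (7/5) m *
      (5 ^ 5 * ((3/5 + ?m) * (4/5 + ?m) * (1 + ?m) * (6/5 + ?m) * (7/5 + ?m)))"
    by (simp only: Suc.IH)
  finally show ?case
    by (simp only: pochhammer_Suc fact_Suc of_nat_mult of_nat_Suc mult_Suc mult_Suc_right power_add mult_ac)
qed simp

lemma Re_pos_notin_nonpos_Ints: "Re z > 0 \<Longrightarrow> (z :: complex) \<notin> \<int>\<^sub>\<le>\<^sub>0"
  using nonpos_Ints_subset_nonpos_Reals complex_nonpos_Reals_iff by fastforce

lemma Gamma_add_of_nat:
  "z \<notin> \<int>\<^sub>\<le>\<^sub>0 \<Longrightarrow> Gamma (z + of_nat n) = pochhammer z n * Gamma z"
  by (simp add: pochhammer_Gamma Gamma_nonzero)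

lemma fact_five_mult_plus_two_Gamma:
  "fact (5 * m + 2) * (Gamma (3/5) * Gamma (4/5) * Gamma (6/5) * Gamma (7/5)) =
     (2 * 5 ^ (5 * m) * fact m * (Gamma (3/5 + of_nat m) * Gamma (4/5 + of_nat m)
        * Gamma (6/5 + of_nat m) * Gamma (7/5 + of_nat m)) :: complex)"
  unfolding fact_five_mult_plus_two
  by (simp add: Gamma_add_of_nat Re_pos_notin_nonpos_Ints mult_ac)

lemma prod_list_Gamma_dilate:
  fixes ps :: "(complex \<times> real) list"
  shows "(\<Prod>p\<leftarrow>map (\<lambda>(a, A). (a + of_nat r * of_real A, of_nat k * A)) ps.
       Gamma (fst p + of_real (snd p) * of_nat m)) =
   (\<Prod>p\<leftarrow>ps. Gamma (fst p + of_real (snd p) * of_nat (k * m + r)))"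
  by (induction ps) (auto simp: algebra_simps)

lemma five_dvd_double_plus_one_iff: "5 dvd 2 * n + 1 \<longleftrightarrow> (\<exists>m. n = 5 * m + (2 :: nat))"
  by presburger

lemma fw_term_scale: "fw_term as bs (w * z) n = w ^ n * fw_term as bs z n"
  by (simp add: fw_term_def power_mult_distrib)

lemma sum_rotated_fw_term:
  defines "\<alpha> \<equiv> exp (2 * of_real pi * \<i> / 5)"
  shows "(\<Sum>k<5. \<alpha> ^ k * fw_term as bs (c * (x * \<alpha> ^ k)\<^sup>2) n) =
    (if 5 dvd (2 * n + 1) then 5 * fw_term as bs (c * x\<^sup>2) n else 0)"
proof -
  have "\<alpha> ^ k * fw_term as bs (c * (x * \<alpha> ^ k)\<^sup>2) n = (\<alpha> ^ (2 * n + 1)) ^ k * fw_term as bs (c * x\<^sup>2) n"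
    for k :: nat
    using fw_term_scale[of as bs "(\<alpha> ^ k)\<^sup>2" "c * x\<^sup>2" n]
    by (simp add: power_mult_distrib power_mult [symmetric] power_add mult_ac)
  then show ?thesis
    using sum_powers_primitive_root_of_unity[of 5 "2 * n + 1"]
    by (simp add: \<alpha>_def sum_distrib_right [symmetric])
qed

lemma fw_term_five_mult_plus_two:
  fixes z :: complex
  shows "fw_term as bs z (5 * m + 2) =
    z\<^sup>2 * Gamma (3/5) * Gamma (4/5) * Gamma (6/5) * Gamma (7/5) / 2 *
    fw_term (map (\<lambda>(a, A). (a + 2 * of_real A, 5 * A)) as)
      ([(3/5, 1), (4/5, 1), (6/5, 1), (7/5, 1)] @ map (\<lambda>(b, B). (b + 2 * of_real B, 5 * B)) bs)
      ((z / 5) ^ 5) m"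
proof -
  let ?G = "Gamma (3/5) * Gamma (4/5) * Gamma (6/5) * Gamma (7/5) :: complex"
  let ?Gm = "Gamma (3/5 + of_nat m) * Gamma (4/5 + of_nat m)
    * Gamma (6/5 + of_nat m) * Gamma (7/5 + of_nat m) :: complex"
  let ?N = "\<Prod>p\<leftarrow>as. Gamma (fst p + of_real (snd p) * of_nat (5 * m + 2))"
  let ?D = "\<Prod>p\<leftarrow>bs. Gamma (fst p + of_real (snd p) * of_nat (5 * m + 2))"
  note dilate = prod_list_Gamma_dilate[where r = 2 and k = 5, unfolded of_nat_numeral]
  have nonzero: "?G \<noteq> 0" "?Gm \<noteq> 0"
    by (simp_all add: Gamma_nonzero Re_pos_notin_nonpos_Ints)
  have fact_eq: "fact (5 * m + 2) = 2 * 5 ^ (5 * m) * fact m * ?Gm / ?G"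
    using fact_five_mult_plus_two_Gamma[of m] nonzero by (simp add: field_simps)
  have "((z / 5) ^ 5) ^ m = z ^ (5 * m) / 5 ^ (5 * m)"
    by (simp only: power_mult [symmetric] power_divide)
  then have power_eq: "z ^ (5 * m + 2) = z\<^sup>2 * 5 ^ (5 * m) * ((z / 5) ^ 5) ^ m"
    by (simp add: power_add power2_eq_square)
  have "fw_term as bs z (5 * m + 2) = ?N / ?D * z ^ (5 * m + 2) / fact (5 * m + 2)"
    by (simp only: fw_term_def of_nat_fact)
  also have "\<dots> = z\<^sup>2 * ?G / 2 * (?N / (?Gm * ?D) * ((z / 5) ^ 5) ^ m / fact m)"
    unfolding power_eq fact_eq using nonzero by (simp add: field_simps)
  also have "\<dots> = z\<^sup>2 * ?G / 2 *
    fw_term (map (\<lambda>(a, A). (a + 2 * of_real A, 5 * A)) as)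
      ([(3/5, 1), (4/5, 1), (6/5, 1), (7/5, 1)] @ map (\<lambda>(b, B). (b + 2 * of_real B, 5 * B)) bs)
      ((z / 5) ^ 5) m"
    unfolding fw_term_def map_append prod_list.append dilate by (simp add: mult_ac)
  finally show ?thesis by (simp only: mult.assoc)
qed

lemma sums_rotated_fox_wright:
  defines "\<alpha> \<equiv> exp (2 * of_real pi * \<i> / 5)"
  assumes "\<forall>k<5::nat. summable (fw_term as bs (c * (x * \<alpha> ^ k)\<^sup>2))"
  shows "(\<lambda>n. if 5 dvd (2 * n + 1) then 5 * fw_term as bs (c * x\<^sup>2) n else 0) sums
    (\<Sum>k<5. \<alpha> ^ k * fox_wright as bs (c * (x * \<alpha> ^ k)\<^sup>2))"
proof -
  have "(\<lambda>n. \<Sum>k<5. \<alpha> ^ k * fw_term as bs (c * (x * \<alpha> ^ k)\<^sup>2) n) sums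
      (\<Sum>k<5. \<alpha> ^ k * fox_wright as bs (c * (x * \<alpha> ^ k)\<^sup>2))"
    using assms(2) unfolding fox_wright_def by (intro sums_sum sums_mult summable_sums) auto
  then show ?thesis
    unfolding \<alpha>_def sum_rotated_fw_term .
qed

theorem theorem4:
  fixes c x :: complex and as bs :: "(complex \<times> real) list"
  defines "\<alpha> \<equiv> exp (2 * of_real pi * \<i> / 5)"
  assumes "\<forall>p\<in>set as. snd p \<noteq> 0"
    and "\<forall>p\<in>set bs. snd p \<noteq> 0"
    and "fw_num_ok as"
    and "\<forall>k<5::nat. summable (fw_term as bs (c * (x * \<alpha> ^ k)\<^sup>2))"
    and "summable (fw_term (map (\<lambda>(a, A). (a + 2 * of_real A, 5 * A)) as)
           ([(3/5, 1), (4/5, 1), (6/5, 1), (7/5, 1)] @ map (\<lambda>(b, B). (b + 2 * of_real B, 5 * B)) bs)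
           ((c * x\<^sup>2 / 5) ^ 5))"
  shows "(\<Sum>k<5::nat. \<alpha> ^ k * fox_wright as bs (c * (x * \<alpha> ^ k)\<^sup>2)) =
    5 * c\<^sup>2 * x ^ 4 * Gamma (3/5) * Gamma (4/5) * Gamma (6/5) * Gamma (7/5) / 2 *
    fox_wright (map (\<lambda>(a, A). (a + 2 * of_real A, 5 * A)) as)
      ([(3/5, 1), (4/5, 1), (6/5, 1), (7/5, 1)] @ map (\<lambda>(b, B). (b + 2 * of_real B, 5 * B)) bs)
      ((c * x\<^sup>2 / 5) ^ 5)"
proof -
  let ?g = "\<lambda>n. if 5 dvd (2 * n + 1) then 5 * fw_term as bs (c * x\<^sup>2) n else 0"
  let ?H = "fw_term (map (\<lambda>(a, A). (a + 2 * of_real A, 5 * A)) as)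
    ([(3/5, 1), (4/5, 1), (6/5, 1), (7/5, 1)] @ map (\<lambda>(b, B). (b + 2 * of_real B, 5 * B)) bs)
    ((c * x\<^sup>2 / 5) ^ 5)"
  let ?K = "5 * c\<^sup>2 * x ^ 4 * Gamma (3/5) * Gamma (4/5) * Gamma (6/5) * Gamma (7/5) / 2"
  have "?g sums (\<Sum>k<5. \<alpha> ^ k * fox_wright as bs (c * (x * \<alpha> ^ k)\<^sup>2))"
    using assms(5) unfolding \<alpha>_def by (rule sums_rotated_fox_wright)
  then have reindexed: "(\<lambda>m. ?g (5 * m + 2)) sums (\<Sum>k<5. \<alpha> ^ k * fox_wright as bs (c * (x * \<alpha> ^ k)\<^sup>2))"
    using five_dvd_double_plus_one_iff by (subst sums_mono_reindex) (auto simp: strict_mono_def)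
  have term_eq: "?g (5 * m + 2) = ?K * ?H m" for m
  proof -
    have "5 dvd 2 * (5 * m + 2) + 1" by presburger
    moreover have "(c * x\<^sup>2)\<^sup>2 = c\<^sup>2 * x ^ 4"
      by (simp add: power_mult_distrib power_mult [symmetric])
    ultimately show ?thesis
      by (simp only: if_True fw_term_five_mult_plus_two) (simp add: mult_ac)
  qed
  have "(\<lambda>m. ?K * ?H m) sums (\<Sum>k<5. \<alpha> ^ k * fox_wright as bs (c * (x * \<alpha> ^ k)\<^sup>2))"
    using reindexed unfolding term_eq .
  moreover have "(\<lambda>m. ?K * ?H m) sums (?K * fox_wright (map (\<lambda>(a, A). (a + 2 * of_real A, 5 * A)) as)
      ([(3/5, 1), (4/5, 1), (6/5, 1), (7/5, 1)] @ map (\<lambda>(b, B). (b + 2 * of_real B, 5 * B)) bs)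
      ((c * x\<^sup>2 / 5) ^ 5))"
    using assms(6) unfolding fox_wright_def by (intro sums_mult summable_sums)
  ultimately show ?thesis
    by (rule sums_unique2)
qed

end
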